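(* Let $\Omega\subset\mathbb{R}^3$ be a domain, $q\in C(\Omega,\mathbb{C})$, and let $\mathbf Q_1,\mathbf Q_2,\mathbf Q_3,\mathbf Q_4$ be four solutions of the same Riccati equation $D\mathbf Q+|\mathbf Q|^2=q$ in $\Omega$ such that the differences $\mathbf Q_1-\mathbf Q_2$, $\mathbf Q_3-\mathbf Q_4$, $\mathbf Q_1-\mathbf Q_4$, $\mathbf Q_3-\mathbf Q_2$ are invertible in $\mathbb{H}(\mathbb{C})$ at every point. Then $$\frac{D(\mathbf Q_1-\mathbf Q_2)-2(\mathbf Q_1\times\mathbf Q_2)}{\mathbf Q_1-\mathbf Q_2}+\frac{D(\mathbf Q_3-\mathbf Q_4)-2(\mathbf Q_3\times\mathbf Q_4)}{\mathbf Q_3-\mathbf Q_4}-\frac{D(\mathbf Q_1-\mathbf Q_4)-2(\mathbf Q_1\times\mathbf Q_4)}{\mathbf Q_1-\mathbf Q_4}-\frac{D(\mathbf Q_3-\mathbf Q_2)-2(\mathbf Q_3\times\mathbf Q_2)}{\mathbf Q_3-\mathbf Q_2}=\mathbf 0,$$ where $\frac{a}{b}$ denotes $a\,b^{-1}$ (right division).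
   Context: $\mathbb{H}(\mathbb{C})$ denotes the complex quaternions: elements $x=\sum_{\ell=0}^3x_\ell e_\ell$ with $x_\ell\in\mathbb{C}$, $e_0=1$, $e_pe_q=-\delta_{pq}+\varepsilon_{pqr}e_r$ for $p,q,r\in\{1,2,3\}$, and $i$ commuting with all $e_\ell$; the product of vectors is $\mathbf x\mathbf y=-\langle\mathbf x,\mathbf y\rangle+\mathbf x\times\mathbf y$ with $\langle\cdot,\cdot\rangle$, $\times$ the standard bilinear inner and cross products on $\mathbb{C}^3$. An element $x$ is invertible iff $x\overline x=\sum_\ell x_\ell^2\neq0$, where $\overline{x}=x_0-\mathbf x$. For a vector $\mathbf Q$, $|\mathbf Q|^2=-\mathbf Q^2=\sum_jQ_j^2$. The Dirac operator is $D\varphi=\sum_{k=1}^3e_k\partial_k\varphi$. Solutions of the Riccati equation are $\mathbf Q\in C^1(\Omega,\mathrm{Vec}\,\mathbb{H}(\mathbb{C}))$. *)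

theory Defs
  imports "HOL-Analysis.Analysis"
begin

datatype cquat = CQ (cq0: complex) (cq1: complex) (cq2: complex) (cq3: complex)

instantiation cquat :: "{zero, one, plus, minus, uminus, times}"
begin
definition "0 = CQ 0 0 0 0"
definition "1 = CQ 1 0 0 0"
definition "x + y = CQ (cq0 x + cq0 y) (cq1 x + cq1 y) (cq2 x + cq2 y) (cq3 x + cq3 y)"
definition "x - y = CQ (cq0 x - cq0 y) (cq1 x - cq1 y) (cq2 x - cq2 y) (cq3 x - cq3 y)"
definition "- x = CQ (- cq0 x) (- cq1 x) (- cq2 x) (- cq3 x)"
text \<open>Product from e_p e_q = -delta_pq + eps_pqr e_r.\<close>
definition "x * y = CQ
   (cq0 x * cq0 y - cq1 x * cq1 y - cq2 x * cq2 y - cq3 x * cq3 y)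
   (cq0 x * cq1 y + cq1 x * cq0 y + cq2 x * cq3 y - cq3 x * cq2 y)
   (cq0 x * cq2 y + cq2 x * cq0 y + cq3 x * cq1 y - cq1 x * cq3 y)
   (cq0 x * cq3 y + cq3 x * cq0 y + cq1 x * cq2 y - cq2 x * cq1 y)"
instance ..
end

definition cq_scal :: "complex \<Rightarrow> cquat" where
  "cq_scal a = CQ a 0 0 0"

definition cq_smult :: "complex \<Rightarrow> cquat \<Rightarrow> cquat" where
  "cq_smult a x = CQ (a * cq0 x) (a * cq1 x) (a * cq2 x) (a * cq3 x)"

definition cq_cnj :: "cquat \<Rightarrow> cquat" where
  "cq_cnj x = CQ (cq0 x) (- cq1 x) (- cq2 x) (- cq3 x)"

text \<open>x * cnj x = sum of squares of the (complex) components.\<close>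
definition cq_normsq :: "cquat \<Rightarrow> complex" where
  "cq_normsq x = (cq0 x)\<^sup>2 + (cq1 x)\<^sup>2 + (cq2 x)\<^sup>2 + (cq3 x)\<^sup>2"

definition cq_invertible :: "cquat \<Rightarrow> bool" where
  "cq_invertible x \<longleftrightarrow> (\<exists>y. x * y = 1 \<and> y * x = 1)"

definition cq_inv :: "cquat \<Rightarrow> cquat" where
  "cq_inv x = cq_smult (inverse (cq_normsq x)) (cq_cnj x)"

definition cq_rdiv :: "cquat \<Rightarrow> cquat \<Rightarrow> cquat" where
  "cq_rdiv a b = a * cq_inv b"

definition cq_vec :: "complex^3 \<Rightarrow> cquat" where
  "cq_vec v = CQ 0 (v$1) (v$2) (v$3)"

definition cq_e :: "3 \<Rightarrow> cquat" where
  "cq_e k = cq_vec (axis k 1)"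

text \<open>|Q|^2 = sum of Q_j^2 (bilinear, not hermitian).\<close>
definition vsq :: "complex^3 \<Rightarrow> complex" where
  "vsq v = (v$1)\<^sup>2 + (v$2)\<^sup>2 + (v$3)\<^sup>2"

definition ccross :: "complex^3 \<Rightarrow> complex^3 \<Rightarrow> complex^3" where
  "ccross x y = vector [x$2 * y$3 - x$3 * y$2, x$3 * y$1 - x$1 * y$3, x$1 * y$2 - x$2 * y$1]"

definition pdiff :: "3 \<Rightarrow> (real^3 \<Rightarrow> complex^3) \<Rightarrow> real^3 \<Rightarrow> complex^3" where
  "pdiff k f x = frechet_derivative f (at x) (axis k 1)"

definition C1_on :: "(real^3) set \<Rightarrow> (real^3 \<Rightarrow> complex^3) \<Rightarrow> bool" where
  "C1_on \<Omega> f \<longleftrightarrow> (\<forall>x\<in>\<Omega>. f differentiable (at x)) \<and> (\<forall>k. continuous_on \<Omega> (pdiff k f))"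

definition dirac :: "(real^3 \<Rightarrow> complex^3) \<Rightarrow> real^3 \<Rightarrow> cquat" where
  "dirac f x = cq_e 1 * cq_vec (pdiff 1 f x) + cq_e 2 * cq_vec (pdiff 2 f x) + cq_e 3 * cq_vec (pdiff 3 f x)"

definition riccati_sol :: "(real^3) set \<Rightarrow> (real^3 \<Rightarrow> complex) \<Rightarrow> (real^3 \<Rightarrow> complex^3) \<Rightarrow> bool" where
  "riccati_sol \<Omega> q Q \<longleftrightarrow> C1_on \<Omega> Q \<and>
     (\<forall>x\<in>\<Omega>. dirac Q x + cq_scal (vsq (Q x)) = cq_scal (q x))"

definition quot_term :: "(real^3 \<Rightarrow> complex^3) \<Rightarrow> (real^3 \<Rightarrow> complex^3) \<Rightarrow> real^3 \<Rightarrow> cquat" where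
  "quot_term Qa Qb x = cq_rdiv (dirac (\<lambda>y. Qa y - Qb y) x - cq_vec (2 *\<^sub>R ccross (Qa x) (Qb x)))
                               (cq_vec (Qa x - Qb x))"

end

theory Submission
  imports Defs
begin

text \<open>
  For two solutions \<open>Q\<^sub>a\<close>, \<open>Q\<^sub>b\<close> of the same Riccati equation the potential \<open>q\<close> cancels:
  \<open>D(Q\<^sub>a - Q\<^sub>b) = |Q\<^sub>b|\<^sup>2 - |Q\<^sub>a|\<^sup>2\<close>. By the multiplication rule for vectors,
  \<open>(Q\<^sub>a + Q\<^sub>b)(Q\<^sub>a - Q\<^sub>b) = |Q\<^sub>b|\<^sup>2 - |Q\<^sub>a|\<^sup>2 - 2 Q\<^sub>a \<times> Q\<^sub>b\<close>, so each quotient in the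
  statement is simply \<open>Q\<^sub>a + Q\<^sub>b\<close>, and the alternating sum of the four of them vanishes.
\<close>

instance cquat :: ring_1
  by standard
    (simp_all add: zero_cquat_def one_cquat_def plus_cquat_def minus_cquat_def uminus_cquat_def
      times_cquat_def algebra_simps)

lemma cq_normsq_mult: "cq_normsq (x * y) = cq_normsq x * cq_normsq y"
  by (simp add: cq_normsq_def times_cquat_def power2_eq_square algebra_simps)

lemma cq_normsq_nonzero_if_invertible:
  assumes "cq_invertible x"
  shows "cq_normsq x \<noteq> 0"
proof
  assume "cq_normsq x = 0"
  moreover obtain y where "x * y = 1"
    using assms by (auto simp: cq_invertible_def)
  ultimately have "cq_normsq 1 = 0"
    by (metis cq_normsq_mult mult_zero_left)
  then show False
    by (simp add: cq_normsq_def one_cquat_def)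
qed

lemma cq_mult_cnj: "x * cq_cnj x = cq_scal (cq_normsq x)"
  by (simp add: cq_cnj_def cq_scal_def times_cquat_def cq_normsq_def power2_eq_square)

lemma cq_mult_smult_right: "x * cq_smult c y = cq_smult c (x * y)"
  by (simp add: cq_smult_def times_cquat_def algebra_simps)

lemma cq_mult_inv_right:
  assumes "cq_normsq x \<noteq> 0"
  shows "x * cq_inv x = 1"
  using assms unfolding cq_inv_def cq_mult_smult_right cq_mult_cnj
  by (simp add: cq_smult_def cq_scal_def one_cquat_def)

lemma cq_rdiv_mult_cancel:
  assumes "cq_normsq b \<noteq> 0"
  shows "cq_rdiv (a * b) b = a"
  by (simp add: cq_rdiv_def mult.assoc cq_mult_inv_right[OF assms])

lemma cq_vec_diff: "cq_vec (a - b) = cq_vec a - cq_vec b"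
  by (simp add: cq_vec_def minus_cquat_def)

lemma cq_vec_add: "cq_vec (a + b) = cq_vec a + cq_vec b"
  by (simp add: cq_vec_def plus_cquat_def)

lemma cq_scal_diff: "cq_scal (a - b) = cq_scal a - cq_scal b"
  by (simp add: cq_scal_def minus_cquat_def)

lemma cq_vec_add_mult_diff:
  "cq_vec (a + b) * cq_vec (a - b) = cq_scal (vsq b - vsq a) - cq_vec (2 *\<^sub>R ccross a b)"
  by (simp add: cq_vec_def cq_scal_def vsq_def ccross_def times_cquat_def minus_cquat_def
      power2_eq_square scaleR_conv_of_real algebra_simps)

lemma pdiff_diff:
  assumes "f differentiable (at x)" and "g differentiable (at x)"
  shows "pdiff k (\<lambda>y. f y - g y) x = pdiff k f x - pdiff k g x"
proof -
  have "((\<lambda>y. f y - g y) has_derivative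
      (\<lambda>h. frechet_derivative f (at x) h - frechet_derivative g (at x) h)) (at x)"
    using assms by (intro has_derivative_diff) (auto simp: frechet_derivative_works[symmetric])
  then show ?thesis
    unfolding pdiff_def by (simp add: frechet_derivative_at[symmetric])
qed

lemma dirac_diff:
  assumes "f differentiable (at x)" and "g differentiable (at x)"
  shows "dirac (\<lambda>y. f y - g y) x = dirac f x - dirac g x"
  using assms by (simp add: dirac_def pdiff_diff cq_vec_diff algebra_simps)

lemma riccati_sol_dirac:
  assumes "riccati_sol \<Omega> q Q" and "x \<in> \<Omega>"
  shows "dirac Q x = cq_scal (q x) - cq_scal (vsq (Q x))"
  using assms by (simp add: riccati_sol_def eq_diff_eq)

lemma riccati_sol_dirac_diff:
  assumes "riccati_sol \<Omega> q A" and "riccati_sol \<Omega> q B" and "x \<in> \<Omega>"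
  shows "dirac (\<lambda>y. A y - B y) x = cq_scal (vsq (B x) - vsq (A x))"
proof -
  have "A differentiable (at x)" and "B differentiable (at x)"
    using assms by (auto simp: riccati_sol_def C1_on_def)
  then show ?thesis
    using assms by (simp add: dirac_diff riccati_sol_dirac cq_scal_diff)
qed

lemma quot_term_riccati_sol:
  assumes "riccati_sol \<Omega> q A" and "riccati_sol \<Omega> q B" and "x \<in> \<Omega>"
    and "cq_invertible (cq_vec (A x - B x))"
  shows "quot_term A B x = cq_vec (A x + B x)"
  using assms
  by (simp add: quot_term_def riccati_sol_dirac_diff cq_vec_add_mult_diff[symmetric]
      cq_rdiv_mult_cancel cq_normsq_nonzero_if_invertible)

theorem theorem4:
  fixes \<Omega> :: "(real^3) set" and q :: "real^3 \<Rightarrow> complex"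
    and Q1 Q2 Q3 Q4 :: "real^3 \<Rightarrow> complex^3"
  assumes "open \<Omega>" and "connected \<Omega>"
    and "continuous_on \<Omega> q"
    and "riccati_sol \<Omega> q Q1" and "riccati_sol \<Omega> q Q2"
    and "riccati_sol \<Omega> q Q3" and "riccati_sol \<Omega> q Q4"
    and "\<forall>x\<in>\<Omega>. cq_invertible (cq_vec (Q1 x - Q2 x))"
    and "\<forall>x\<in>\<Omega>. cq_invertible (cq_vec (Q3 x - Q4 x))"
    and "\<forall>x\<in>\<Omega>. cq_invertible (cq_vec (Q1 x - Q4 x))"
    and "\<forall>x\<in>\<Omega>. cq_invertible (cq_vec (Q3 x - Q2 x))"
  shows "\<forall>x\<in>\<Omega>. quot_term Q1 Q2 x + quot_term Q3 Q4 x - quot_term Q1 Q4 x - quot_term Q3 Q2 x = 0"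
proof
  fix x assume "x \<in> \<Omega>"
  then have "quot_term Q1 Q2 x + quot_term Q3 Q4 x - quot_term Q1 Q4 x - quot_term Q3 Q2 x
      = cq_vec (Q1 x + Q2 x) + cq_vec (Q3 x + Q4 x) - cq_vec (Q1 x + Q4 x) - cq_vec (Q3 x + Q2 x)"
    (is "?lhs = _") using assms by (simp add: quot_term_riccati_sol)
  also have "\<dots> = 0"
    by (simp add: cq_vec_add)
  finally show "?lhs = 0" .
qed

end
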